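(* Let $n\ge 2$ be an integer, $p,q\in\mathbb{R}$ with $q>0$, and let $M$ be a real $n\times n$ matrix such that each of the numbers $p, p+q, \dots, p+(n-1)q$ appears exactly $n$ times among the entries of $M$. Set $$r := \frac pq + \frac{n-1}{2},\quad \rho := \frac{n+1}{12},\quad \sigma := nq^2\left(r^2 + \frac{n^2-1}{12}\right).$$ Then: if $r^2 < \rho$: $|\det M| \le \sigma^{n/2}$; if $r^2 = \rho$: $|\det M| \le n^n q^n |r| \rho^{\frac{n-1}{2}} = \sigma^{n/2}$; if $r^2 > \rho$: $|\det M| \le n^n q^n |r| \rho^{\frac{n-1}{2}} < \sigma^{n/2}$. *)

theory Defs
  imports "HOL-Analysis.Analysis"
begin

end

theory Submission
  imports Defs
begin

text \<open>Let \<open>F\<close> be the sum of the squares of the entries of \<open>M\<close> and \<open>S\<close> the sum of its entries;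
  the hypothesis on the entries gives \<open>F = n \<sigma>\<close> and \<open>S = n^2 q r\<close>. Hadamard's inequality and
  AM-GM for the squared row norms give \<open>det(M)^2 \<le> (F/n)^n = \<sigma>^n\<close>.

  For the sharper bound, multiply \<open>M\<close> by an orthogonal matrix one of whose rows is
  \<open>(1,...,1)/sqrt n\<close>. That row of the product has squared norm \<open>a \<ge> (S/n)^2\<close> (Cauchy-Schwarz),
  and the other \<open>n - 1\<close> rows share the remaining \<open>F - a\<close>, so
  \<open>det(M)^2 \<le> a ((F - a)/(n - 1))^(n - 1)\<close>. The right-hand side decreases in \<open>a\<close> on \<open>[F/n, F]\<close>.
  If \<open>r^2 \<ge> \<rho>\<close>, i.e. \<open>(S/n)^2 \<ge> F/n = \<sigma>\<close>, evaluating it at \<open>a = (S/n)^2\<close> gives the second bound,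
  and comparing its values at \<open>(S/n)^2\<close> and at \<open>\<sigma>\<close> (where it equals \<open>\<sigma>^n\<close>) compares the two bounds.\<close>

lemma norm_power2_vec_eq_sum: "(norm (x :: real^'n))\<^sup>2 = (\<Sum>i\<in>UNIV. (x $ i)\<^sup>2)"
  unfolding power2_norm_eq_inner inner_vec_def by (simp add: power2_eq_square)

lemma abs_det_eq_prod_norm_rows_if_orthogonal:
  fixes A :: "real^'n^'n"
  assumes orth: "\<And>i j. i \<noteq> j \<Longrightarrow> A $ i \<bullet> A $ j = 0"
  shows "\<bar>det A\<bar> = (\<Prod>i\<in>UNIV. norm (A $ i))"
proof -
  have "(A ** transpose A) $ i $ j = (if i = j then (norm (A $ i))\<^sup>2 else 0)" for i j
    using orth[of i j]
    by (auto simp: matrix_matrix_mult_def transpose_def inner_vec_def power2_norm_eq_inner)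
  then have "det (A ** transpose A) = (\<Prod>i\<in>UNIV. (norm (A $ i))\<^sup>2)"
    by (subst det_diagonal) simp_all
  then have "\<bar>det A\<bar>\<^sup>2 = (\<Prod>i\<in>UNIV. norm (A $ i))\<^sup>2"
    by (simp add: det_mul power2_eq_square prod.distrib)
  then show ?thesis
    by (rule power2_eq_imp_eq) (auto intro: prod_nonneg)
qed

text \<open>Gram--Schmidt by row operations: subtracting from row \<open>k\<close> its projection onto the
  span of the rows in \<open>S\<close> keeps the determinant and can only shorten row \<open>k\<close>.\<close>
lemma exists_orthogonal_rows_same_det:
  fixes A :: "real^'n^'n"
  assumes "finite S"
  shows "\<exists>B :: real^'n^'n. det B = det A \<and> (\<forall>i. norm (B $ i) \<le> norm (A $ i)) \<and>
           (\<forall>i\<in>S. \<forall>j\<in>S. i \<noteq> j \<longrightarrow> B $ i \<bullet> B $ j = 0)"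
  using assms
proof (induction S rule: finite_induct)
  case empty
  show ?case by (intro exI[of _ A]) auto
next
  case (insert k S)
  then obtain B :: "real^'n^'n" where det_B: "det B = det A"
    and norm_B: "\<forall>i. norm (B $ i) \<le> norm (A $ i)"
    and orth: "\<forall>i\<in>S. \<forall>j\<in>S. i \<noteq> j \<longrightarrow> B $ i \<bullet> B $ j = 0"
    by blast
  define c where "c i = (B $ k \<bullet> B $ i) / (B $ i \<bullet> B $ i)" for i
  define w where "w = (\<Sum>i\<in>S. c i *s B $ i)"
  define C :: "real^'n^'n" where "C = (\<chi> l. if l = k then row k B + - w else row l B)"
  have row_B: "row l B = B $ l" for l
    by (simp add: row_def vec_eq_iff)
  have "- w \<in> vec.span {row j B | j. j \<noteq> k}"
    unfolding w_def
    by (intro vec.span_neg vec.span_sum vec.span_scale vec.span_base) (use insert.hyps row_B in auto)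
  then have det_C: "det C = det B"
    unfolding C_def by (rule det_row_span)
  have C_k: "C $ k = B $ k - w" and C_other: "\<And>l. l \<noteq> k \<Longrightarrow> C $ l = B $ l"
    by (simp_all add: C_def row_B)
  have w_inner: "w \<bullet> B $ j = B $ k \<bullet> B $ j" if "j \<in> S" for j
  proof -
    have "w \<bullet> B $ j = (\<Sum>i\<in>S. c i * (B $ i \<bullet> B $ j))"
      unfolding w_def by (simp add: inner_sum_left scalar_mult_eq_scaleR)
    also have "\<dots> = (\<Sum>i\<in>S. if i = j then c j * (B $ j \<bullet> B $ j) else 0)"
      by (rule sum.cong) (use orth that in auto)
    also have "\<dots> = c j * (B $ j \<bullet> B $ j)"
      using that insert.hyps by simp
    also have "\<dots> = B $ k \<bullet> B $ j"
      by (cases "B $ j \<bullet> B $ j = 0") (auto simp: c_def)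
    finally show ?thesis .
  qed
  then have orth_k: "(B $ k - w) \<bullet> B $ j = 0" if "j \<in> S" for j
    using that by (simp add: inner_diff_left)
  have "v \<bullet> w = (\<Sum>i\<in>S. c i * (v \<bullet> B $ i))" for v
    unfolding w_def by (simp add: inner_sum_right scalar_mult_eq_scaleR)
  then have "(B $ k - w) \<bullet> w = 0"
    using orth_k by simp
  then have "(norm (B $ k))\<^sup>2 = (norm (B $ k - w))\<^sup>2 + (norm w)\<^sup>2"
    using norm_add_Pythagorean[of "B $ k - w" w] by (simp add: orthogonal_def)
  then have "(norm (B $ k - w))\<^sup>2 \<le> (norm (B $ k))\<^sup>2"
    by simp
  then have "norm (B $ k - w) \<le> norm (B $ k)"
    by (rule power2_le_imp_le) simp
  then have "norm (C $ i) \<le> norm (A $ i)" for i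
    using norm_B by (cases "i = k") (auto simp: C_k C_other intro: order_trans)
  moreover have "C $ i \<bullet> C $ j = 0" if "i \<in> insert k S" "j \<in> insert k S" "i \<noteq> j" for i j
  proof -
    consider "i = k" | "j = k" | "i \<noteq> k" "j \<noteq> k"
      by blast
    then show ?thesis
    proof cases
      case 1
      then show ?thesis using that orth_k by (simp add: C_k C_other)
    next
      case 2
      then show ?thesis using that orth_k by (auto simp: C_k C_other inner_commute)
    next
      case 3
      then show ?thesis using that orth by (simp add: C_other)
    qed
  qed
  ultimately show ?case
    using det_C det_B by (intro exI[of _ C]) auto
qed

theorem hadamard_inequality:
  fixes A :: "real^'n^'n"
  shows "\<bar>det A\<bar> \<le> (\<Prod>i\<in>UNIV. norm (A $ i))"
proof -
  obtain B :: "real^'n^'n" where "det B = det A" and norm_B: "\<forall>i. norm (B $ i) \<le> norm (A $ i)"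
    and "\<forall>i j. i \<noteq> j \<longrightarrow> B $ i \<bullet> B $ j = 0"
    using exists_orthogonal_rows_same_det[of UNIV A] by auto
  then have "\<bar>det A\<bar> = (\<Prod>i\<in>UNIV. norm (B $ i))"
    using abs_det_eq_prod_norm_rows_if_orthogonal[of B] by auto
  also have "\<dots> \<le> (\<Prod>i\<in>UNIV. norm (A $ i))"
    by (rule prod_mono) (use norm_B in auto)
  finally show ?thesis .
qed

lemma det_power2_le_prod_norm_rows:
  fixes A :: "real^'n^'n"
  shows "(det A)\<^sup>2 \<le> (\<Prod>i\<in>UNIV. (norm (A $ i))\<^sup>2)"
proof -
  have "\<bar>det A\<bar>\<^sup>2 \<le> (\<Prod>i\<in>UNIV. norm (A $ i))\<^sup>2"
    by (rule power_mono[OF hadamard_inequality]) simp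
  then show ?thesis
    by (simp add: prod_power_distrib)
qed

lemma prod_le_mean_power:
  fixes x :: "'a \<Rightarrow> real"
  assumes nonneg: "\<And>i. i \<in> S \<Longrightarrow> 0 \<le> x i"
  shows "(\<Prod>i\<in>S. x i) \<le> ((\<Sum>i\<in>S. x i) / card S) ^ card S"
proof (cases "finite S \<and> S \<noteq> {}")
  case False
  then show ?thesis by auto
next
  case True
  define P where "P = (\<Prod>i\<in>S. x i)"
  have "P \<ge> 0" "card S \<noteq> 0"
    using nonneg True by (simp_all add: P_def prod_nonneg)
  have "P powr (1 / card S) \<le> (\<Sum>i\<in>S. x i) / card S"
    using arith_geom_mean[of S x] True nonneg by (simp add: P_def sum_divide_distrib)
  then have "(P powr (1 / card S)) ^ card S \<le> ((\<Sum>i\<in>S. x i) / card S) ^ card S"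
    by (rule power_mono) simp
  moreover have "(P powr (1 / card S)) ^ card S = P"
    using \<open>P \<ge> 0\<close> \<open>card S \<noteq> 0\<close> by (simp add: powr_realpow'[symmetric] powr_powr)
  ultimately show ?thesis
    by (simp add: P_def)
qed

lemma det_power2_le_mean_norm_rows:
  fixes A :: "real^'n^'n"
  shows "(det A)\<^sup>2 \<le> ((\<Sum>i\<in>UNIV. (norm (A $ i))\<^sup>2) / CARD('n)) ^ CARD('n)"
  using det_power2_le_prod_norm_rows[of A] prod_le_mean_power[of UNIV "\<lambda>i. (norm (A $ i))\<^sup>2"]
  by simp

lemma orthogonal_matrix_with_row:
  fixes u :: "real^'n"
  assumes "norm u = 1"
  obtains H :: "real^'n^'n" where "orthogonal_matrix H" "H $ k = u"
proof -
  obtain A :: "real^'n^'n" where "orthogonal_matrix A" "A *v axis k 1 = u"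
    using orthogonal_matrix_exists_basis[OF assms] by blast
  moreover have "transpose A $ k = column k A"
    by (simp add: vec_eq_iff transpose_def column_def)
  ultimately show thesis
    using that[of "transpose A"] by (simp add: matrix_vector_mult_basis)
qed

lemma sum_norm_rows_eq_sum_norm_columns:
  fixes A :: "real^'n^'m"
  shows "(\<Sum>i\<in>UNIV. (norm (A $ i))\<^sup>2) = (\<Sum>j\<in>UNIV. (norm (column j A))\<^sup>2)"
  unfolding norm_power2_vec_eq_sum column_def by simp (rule sum.swap)

lemma sum_norm_rows_orthogonal_matrix_mult:
  fixes H A :: "real^'n^'n"
  assumes "orthogonal_matrix H"
  shows "(\<Sum>i\<in>UNIV. (norm ((H ** A) $ i))\<^sup>2) = (\<Sum>i\<in>UNIV. (norm (A $ i))\<^sup>2)"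
proof -
  have "orthogonal_transformation (\<lambda>x. H *v x)"
    using assms by (simp add: orthogonal_transformation_matrix)
  moreover have "column j (H ** A) = H *v column j A" for j
    by (simp add: vec_eq_iff column_def matrix_matrix_mult_def matrix_vector_mult_def)
  ultimately have "norm (column j (H ** A)) = norm (column j A)" for j
    by (simp add: orthogonal_transformation_norm)
  then show ?thesis
    by (simp add: sum_norm_rows_eq_sum_norm_columns)
qed

lemma det_power2_le_split_row:
  fixes A :: "real^'n^'n"
  defines "F \<equiv> \<Sum>i\<in>UNIV. (norm (A $ i))\<^sup>2" and "S \<equiv> \<Sum>i\<in>UNIV. \<Sum>j\<in>UNIV. A $ i $ j"
    and "m \<equiv> CARD('n) - 1"
  obtains a where "(S / CARD('n))\<^sup>2 \<le> a" "a \<le> F" "(det A)\<^sup>2 \<le> a * ((F - a) / m) ^ m"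
proof -
  define n where "n = CARD('n)"
  have "n > 0"
    by (simp add: n_def)
  fix k :: 'n
  define u :: "real^'n" where "u = (\<chi> i. 1 / sqrt n)"
  have "(norm u)\<^sup>2 = 1"
    using \<open>n > 0\<close> by (simp add: norm_power2_vec_eq_sum u_def power_divide n_def)
  then have "norm u = 1"
    using norm_ge_zero[of u] by (auto simp: power2_eq_1_iff)
  then obtain H :: "real^'n^'n" where H: "orthogonal_matrix H" "H $ k = u"
    by (rule orthogonal_matrix_with_row)
  define B where "B = H ** A"
  define a where "a = (norm (B $ k))\<^sup>2"
  have "(\<Sum>i\<in>UNIV. (norm (B $ i))\<^sup>2) = F"
    unfolding B_def F_def by (rule sum_norm_rows_orthogonal_matrix_mult[OF H(1)])
  then have rest: "(\<Sum>i\<in>UNIV - {k}. (norm (B $ i))\<^sup>2) = F - a"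
    using sum.remove[of UNIV k "\<lambda>i. (norm (B $ i))\<^sup>2"] by (simp add: a_def)
  define c where "c j = (\<Sum>l\<in>UNIV. A $ l $ j)" for j
  have "B $ k $ j = c j / sqrt n" for j
    using H(2) by (simp add: B_def matrix_matrix_mult_def u_def c_def sum_divide_distrib)
  then have a_eq: "a = (\<Sum>j\<in>UNIV. (c j)\<^sup>2) / n"
    using \<open>n > 0\<close> by (simp add: a_def norm_power2_vec_eq_sum power_divide sum_divide_distrib)
  have "S = (\<Sum>j\<in>UNIV. c j)"
    unfolding S_def c_def by (rule sum.swap)
  then have "S\<^sup>2 \<le> (\<Sum>j\<in>UNIV. (c j)\<^sup>2) * n"
    using sum_squared_le_sum_of_squares[of c UNIV] by (simp add: n_def)
  then have "(S / n)\<^sup>2 \<le> a"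
    using \<open>n > 0\<close> by (simp add: a_eq field_simps power2_eq_square)
  moreover have "a \<le> F"
    using rest sum_nonneg[of "UNIV - {k}" "\<lambda>i. (norm (B $ i))\<^sup>2"] by simp
  moreover have "(det A)\<^sup>2 \<le> a * ((F - a) / m) ^ m"
  proof -
    have "(det A)\<^sup>2 = (det B)\<^sup>2"
      using det_orthogonal_matrix[OF H(1)] by (auto simp: B_def det_mul)
    also have "\<dots> \<le> (\<Prod>i\<in>UNIV. (norm (B $ i))\<^sup>2)"
      by (rule det_power2_le_prod_norm_rows)
    also have "\<dots> = a * (\<Prod>i\<in>UNIV - {k}. (norm (B $ i))\<^sup>2)"
      by (simp add: a_def prod.remove)
    also have "\<dots> \<le> a * ((F - a) / m) ^ m"
      using prod_le_mean_power[of "UNIV - {k}" "\<lambda>i. (norm (B $ i))\<^sup>2"]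
      by (intro mult_left_mono) (simp_all add: rest a_def m_def card_Diff_singleton)
    finally show ?thesis .
  qed
  ultimately show thesis
    using that by (simp add: n_def)
qed

lemma mult_power_strict_antimono:
  fixes F x y :: real and m :: nat
  assumes "m \<ge> 1" "F \<le> (real m + 1) * y" "y < x" "x \<le> F"
  shows "x * ((F - x) / m) ^ m < y * ((F - y) / m) ^ m"
proof (rule DERIV_neg_imp_decreasing_open[OF \<open>y < x\<close>])
  fix t
  assume "y < t" "t < x"
  note \<open>F \<le> (real m + 1) * y\<close>
  also have "(real m + 1) * y < (real m + 1) * t"
    using \<open>y < t\<close> by simp
  finally have neg: "((F - t) / m) ^ (m - 1) * ((F - t) / m - t) < 0"
    using assms \<open>t < x\<close> by (intro mult_pos_neg) (auto simp: field_simps)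
  have "DERIV (\<lambda>t. t * ((F - t) / m) ^ m) t :> ((F - t) / m) ^ m - t * ((F - t) / m) ^ (m - 1)"
    using \<open>m \<ge> 1\<close> by (auto intro!: derivative_eq_intros)
  moreover have "((F - t) / m) ^ m - t * ((F - t) / m) ^ (m - 1) = ((F - t) / m) ^ (m - 1) * ((F - t) / m - t)"
    using \<open>m \<ge> 1\<close> power_minus_mult[of m "(F - t) / m"] by (simp add: algebra_simps)
  ultimately show "\<exists>d. DERIV (\<lambda>t. t * ((F - t) / m) ^ m) t :> d \<and> d < 0"
    using neg by auto
qed (use assms(1) in \<open>intro continuous_intros, auto\<close>)

lemma det_power2_le_entry_sum_bound:
  fixes A :: "real^'n^'n"
  defines "F \<equiv> \<Sum>i\<in>UNIV. (norm (A $ i))\<^sup>2" and "S \<equiv> \<Sum>i\<in>UNIV. \<Sum>j\<in>UNIV. A $ i $ j"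
    and "n \<equiv> CARD('n)"
  assumes "n \<ge> 2" and "F \<le> n * (S / n)\<^sup>2"
  shows "(det A)\<^sup>2 \<le> (S / n)\<^sup>2 * ((F - (S / n)\<^sup>2) / real (n - 1)) ^ (n - 1)"
proof -
  obtain a where a: "(S / n)\<^sup>2 \<le> a" "a \<le> F" "(det A)\<^sup>2 \<le> a * ((F - a) / (n - 1)) ^ (n - 1)"
    using det_power2_le_split_row[of A] unfolding F_def S_def n_def by blast
  have "a * ((F - a) / (n - 1)) ^ (n - 1) \<le> (S / n)\<^sup>2 * ((F - (S / n)\<^sup>2) / (n - 1)) ^ (n - 1)"
  proof (cases "a = (S / n)\<^sup>2")
    case False
    have mean_le: "F \<le> (real (n - 1) + 1) * (S / n)\<^sup>2"
      using assms(4,5) by simp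
    have "a * ((F - a) / real (n - 1)) ^ (n - 1)
        < (S / n)\<^sup>2 * ((F - (S / n)\<^sup>2) / real (n - 1)) ^ (n - 1)"
      by (rule mult_power_strict_antimono[OF _ mean_le]) (use assms(4) a(1,2) False in auto)
    then show ?thesis
      using assms(4) by simp
  qed simp
  then show ?thesis
    using a(3) by linarith
qed

lemma sum_entries_by_multiplicity:
  fixes M :: "real^'n^'n" and g :: "real \<Rightarrow> real"
  assumes "q \<noteq> 0"
    and entries: "\<And>k. k < CARD('n) \<Longrightarrow> card {(i, j). M $ i $ j = p + real k * q} = CARD('n)"
  shows "(\<Sum>i\<in>UNIV. \<Sum>j\<in>UNIV. g (M $ i $ j)) = CARD('n) * (\<Sum>k<CARD('n). g (p + real k * q))"
proof -
  define n where "n = CARD('n)"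
  define E where "E k = {(i, j). M $ i $ j = p + real k * q}" for k
  have disjoint: "E k \<inter> E l = {}" if "k \<noteq> l" for k l
    using that \<open>q \<noteq> 0\<close> by (auto simp: E_def)
  have "card (\<Union>k<n. E k) = (\<Sum>k<n. card (E k))"
    by (rule card_UN_disjoint) (use disjoint in auto)
  also have "\<dots> = card (UNIV :: ('n \<times> 'n) set)"
    using entries by (simp add: E_def n_def card_cartesian_product flip: UNIV_Times_UNIV)
  finally have covers: "(\<Union>k<n. E k) = UNIV"
    by (intro card_subset_eq) auto
  have "(\<Sum>i\<in>UNIV. \<Sum>j\<in>UNIV. g (M $ i $ j)) = (\<Sum>(i, j)\<in>(\<Union>k<n. E k). g (M $ i $ j))"
    unfolding covers UNIV_Times_UNIV[symmetric] by (rule sum.cartesian_product)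
  also have "\<dots> = (\<Sum>k<n. \<Sum>(i, j)\<in>E k. g (M $ i $ j))"
    by (rule sum.UNION_disjoint) (use disjoint in auto)
  also have "\<dots> = (\<Sum>k<n. \<Sum>(i, j)\<in>E k. g (p + real k * q))"
    by (intro sum.cong refl) (auto simp: E_def)
  also have "\<dots> = (\<Sum>k<n. n * g (p + real k * q))"
    using entries by (intro sum.cong refl) (simp add: E_def n_def case_prod_beta)
  finally show ?thesis
    by (simp add: n_def sum_distrib_left)
qed

lemma sum_of_nat_lessThan: "(\<Sum>k<n. real k) = real n * (real n - 1) / 2"
  by (induction n) (auto simp: field_simps)

lemma sum_power2_of_nat_lessThan: "(\<Sum>k<n. (real k)\<^sup>2) = real n * (real n - 1) * (2 * real n - 1) / 6"
  by (induction n) (auto simp: field_simps power2_eq_square)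

lemma sums_of_progression_matrix:
  fixes M :: "real^'n^'n" and p q :: real
  defines "n \<equiv> CARD('n)" and "r \<equiv> p / q + (real CARD('n) - 1) / 2"
  assumes "q \<noteq> 0"
    and entries: "\<And>k. k < n \<Longrightarrow> card {(i, j). M $ i $ j = p + real k * q} = n"
  shows "(\<Sum>i\<in>UNIV. \<Sum>j\<in>UNIV. M $ i $ j) = (real n)\<^sup>2 * q * r"
    and "(\<Sum>i\<in>UNIV. (norm (M $ i))\<^sup>2) = (real n)\<^sup>2 * q\<^sup>2 * (r\<^sup>2 + ((real n)\<^sup>2 - 1) / 12)"
proof -
  note by_multiplicity = sum_entries_by_multiplicity[OF \<open>q \<noteq> 0\<close> entries[unfolded n_def]]
  have p_eq: "p = q * r - q * (real n - 1) / 2"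
    using \<open>q \<noteq> 0\<close> by (simp add: r_def n_def field_simps)
  have "(\<Sum>i\<in>UNIV. \<Sum>j\<in>UNIV. M $ i $ j) = n * (\<Sum>k<n. p + real k * q)"
    using by_multiplicity[of "\<lambda>x. x"] by (simp add: n_def)
  also have "(\<Sum>k<n. p + real k * q) = n * p + q * (\<Sum>k<n. real k)"
    by (simp add: sum.distrib sum_distrib_left mult.commute)
  finally show "(\<Sum>i\<in>UNIV. \<Sum>j\<in>UNIV. M $ i $ j) = (real n)\<^sup>2 * q * r"
    unfolding sum_of_nat_lessThan p_eq by (simp add: field_simps power2_eq_square)
  have "(\<Sum>i\<in>UNIV. (norm (M $ i))\<^sup>2) = n * (\<Sum>k<n. (p + real k * q)\<^sup>2)"
    using by_multiplicity[of "\<lambda>x. x\<^sup>2"] by (simp add: n_def norm_power2_vec_eq_sum)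
  also have "(\<Sum>k<n. (p + real k * q)\<^sup>2)
      = n * p\<^sup>2 + 2 * p * q * (\<Sum>k<n. real k) + q\<^sup>2 * (\<Sum>k<n. (real k)\<^sup>2)"
    by (simp add: power2_sum sum.distrib sum_distrib_left algebra_simps)
  finally show "(\<Sum>i\<in>UNIV. (norm (M $ i))\<^sup>2) = (real n)\<^sup>2 * q\<^sup>2 * (r\<^sup>2 + ((real n)\<^sup>2 - 1) / 12)"
    unfolding sum_of_nat_lessThan sum_power2_of_nat_lessThan p_eq by (simp add: field_simps power2_eq_square)
qed

lemma power2_powr_half: "(0 :: real) < x \<Longrightarrow> (x powr (a / 2))\<^sup>2 = x powr a"
  by (simp add: power2_eq_square powr_add[symmetric])

lemma trichotomy_of_power2_bounds:
  fixes D q r :: real and n :: nat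
  defines "\<rho> \<equiv> (real n + 1) / 12" and "\<sigma> \<equiv> real n * q\<^sup>2 * (r\<^sup>2 + ((real n)\<^sup>2 - 1) / 12)"
    and "x \<equiv> (real n * q * r)\<^sup>2"
  assumes "n \<ge> 2" "q > 0" "D \<ge> 0"
    and general: "D\<^sup>2 \<le> \<sigma> ^ n"
    and refined: "\<sigma> \<le> x \<Longrightarrow> D\<^sup>2 \<le> x * ((real n * \<sigma> - x) / real (n - 1)) ^ (n - 1)"
  shows "(r\<^sup>2 < \<rho> \<longrightarrow> D \<le> \<sigma> powr (real n / 2))
    \<and> (r\<^sup>2 = \<rho> \<longrightarrow> D \<le> real n ^ n * q ^ n * \<bar>r\<bar> * \<rho> powr ((real n - 1) / 2)
        \<and> real n ^ n * q ^ n * \<bar>r\<bar> * \<rho> powr ((real n - 1) / 2) = \<sigma> powr (real n / 2))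
    \<and> (r\<^sup>2 > \<rho> \<longrightarrow> D \<le> real n ^ n * q ^ n * \<bar>r\<bar> * \<rho> powr ((real n - 1) / 2)
        \<and> real n ^ n * q ^ n * \<bar>r\<bar> * \<rho> powr ((real n - 1) / 2) < \<sigma> powr (real n / 2))"
    (is "_ \<and> (_ \<longrightarrow> D \<le> ?B \<and> _) \<and> _")
proof -
  define B where "B = ?B"
  define m where "m = n - 1"
  have m: "m \<ge> 1" "real m = real n - 1" "n = Suc m"
    using \<open>n \<ge> 2\<close> by (auto simp: m_def)
  have "\<rho> > 0"
    by (simp add: \<rho>_def)
  have "(real n)\<^sup>2 > 1"
    using \<open>n \<ge> 2\<close> by simp
  then have "\<sigma> > 0"
    unfolding \<sigma>_def using assms(4,5) by (intro mult_pos_pos add_nonneg_pos) auto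
  have \<sigma>_powr: "(\<sigma> powr (real n / 2))\<^sup>2 = \<sigma> ^ n"
    using \<open>\<sigma> > 0\<close> by (simp add: power2_powr_half powr_realpow)
  have rest: "(real n * \<sigma> - x) / m = (real n)\<^sup>2 * q\<^sup>2 * \<rho>"
    using m by (simp add: \<sigma>_def x_def \<rho>_def field_simps power2_eq_square)
  have B_power2: "B\<^sup>2 = x * ((real n * \<sigma> - x) / m) ^ m"
  proof -
    have power_n: "(a ^ n)\<^sup>2 = a\<^sup>2 * (a\<^sup>2) ^ m" for a :: real
      unfolding m(3) by (metis power_Suc power_mult mult.commute)
    have "(\<rho> powr ((real n - 1) / 2))\<^sup>2 = \<rho> ^ m"
      using \<open>\<rho> > 0\<close> m by (simp add: power2_powr_half powr_realpow)
    then have "B\<^sup>2 = x * ((real n)\<^sup>2 * q\<^sup>2 * \<rho>) ^ m"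
      by (simp add: B_def x_def power_mult_distrib power_n)
    then show ?thesis
      by (simp only: rest)
  qed
  have "B \<ge> 0"
    using \<open>q > 0\<close> by (simp add: B_def)
  have \<sigma>_value: "\<sigma> * ((real n * \<sigma> - \<sigma>) / m) ^ m = \<sigma> ^ n"
    using m by (simp add: field_simps)
  have x_minus_\<sigma>: "x - \<sigma> = real n * q\<^sup>2 * (real n - 1) * (r\<^sup>2 - \<rho>)"
    by (simp add: x_def \<sigma>_def \<rho>_def field_simps power2_eq_square)
  have "0 < (real n * \<sigma> - x) / m"
    unfolding rest using \<open>\<rho> > 0\<close> \<open>q > 0\<close> \<open>n \<ge> 2\<close> by simp
  then have "x \<le> real n * \<sigma>"
    by (simp add: zero_less_divide_iff)
  have D_le_B: "D \<le> B" if "\<sigma> \<le> x"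
  proof (rule power2_le_imp_le[OF _ \<open>B \<ge> 0\<close>])
    show "D\<^sup>2 \<le> B\<^sup>2"
      using refined[OF that] by (simp only: B_power2 m_def)
  qed
  show ?thesis
    unfolding B_def[symmetric]
  proof (intro conjI impI)
    have "D\<^sup>2 \<le> (\<sigma> powr (real n / 2))\<^sup>2"
      unfolding \<sigma>_powr by (rule general)
    then show "D \<le> \<sigma> powr (real n / 2)"
      by (rule power2_le_imp_le) simp
  next
    assume "r\<^sup>2 = \<rho>"
    then have "x = \<sigma>"
      using x_minus_\<sigma> by simp
    then show "D \<le> B"
      by (intro D_le_B) simp
    have "B\<^sup>2 = (\<sigma> powr (real n / 2))\<^sup>2"
      using B_power2 unfolding \<open>x = \<sigma>\<close> \<sigma>_value \<sigma>_powr .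
    then show "B = \<sigma> powr (real n / 2)"
      using \<open>B \<ge> 0\<close> by (rule power2_eq_imp_eq) simp
  next
    assume "r\<^sup>2 > \<rho>"
    then have "0 < real n * q\<^sup>2 * (real n - 1) * (r\<^sup>2 - \<rho>)"
      using \<open>n \<ge> 2\<close> \<open>q > 0\<close> by (intro mult_pos_pos) auto
    then have "\<sigma> < x"
      using x_minus_\<sigma> by linarith
    then show "D \<le> B"
      by (intro D_le_B) simp
    have "real n * \<sigma> \<le> (real m + 1) * \<sigma>"
      using m(2) by simp
    then have "x * ((real n * \<sigma> - x) / m) ^ m < \<sigma> * ((real n * \<sigma> - \<sigma>) / m) ^ m"
      using \<open>\<sigma> < x\<close> \<open>x \<le> real n * \<sigma>\<close> by (intro mult_power_strict_antimono m(1))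
    then have "B\<^sup>2 < (\<sigma> powr (real n / 2))\<^sup>2"
      using B_power2 \<sigma>_value \<sigma>_powr by simp
    then show "B < \<sigma> powr (real n / 2)"
      by (rule power_less_imp_less_base) simp
  qed
qed

theorem mainTheorem9:
  fixes M :: "real ^ 'n ^ 'n" and p q :: real
  assumes n2: "CARD('n) \<ge> 2"
    and qpos: "q > 0"
    and entries: "\<And>k. k < CARD('n) \<Longrightarrow>
        card {(i, j). M $ i $ j = p + real k * q} = CARD('n)"
  shows "let n = CARD('n);
             r = p / q + (real n - 1) / 2;
             \<rho> = (real n + 1) / 12;
             \<sigma> = real n * q\<^sup>2 * (r\<^sup>2 + ((real n)\<^sup>2 - 1) / 12)
         in (r\<^sup>2 < \<rho> \<longrightarrow> \<bar>det M\<bar> \<le> \<sigma> powr (real n / 2))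
          \<and> (r\<^sup>2 = \<rho> \<longrightarrow>
               \<bar>det M\<bar> \<le> real n ^ n * q ^ n * \<bar>r\<bar> * \<rho> powr ((real n - 1) / 2)
             \<and> real n ^ n * q ^ n * \<bar>r\<bar> * \<rho> powr ((real n - 1) / 2) = \<sigma> powr (real n / 2))
          \<and> (r\<^sup>2 > \<rho> \<longrightarrow>
               \<bar>det M\<bar> \<le> real n ^ n * q ^ n * \<bar>r\<bar> * \<rho> powr ((real n - 1) / 2)
             \<and> real n ^ n * q ^ n * \<bar>r\<bar> * \<rho> powr ((real n - 1) / 2) < \<sigma> powr (real n / 2))"
proof -
  define n where "n = CARD('n)"
  define r where "r = p / q + (real n - 1) / 2"
  define \<sigma> where "\<sigma> = real n * q\<^sup>2 * (r\<^sup>2 + ((real n)\<^sup>2 - 1) / 12)"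
  have "n \<ge> 2" "n > 0"
    using n2 by (simp_all add: n_def)
  have entry_sum: "(\<Sum>i\<in>UNIV. \<Sum>j\<in>UNIV. M $ i $ j) / n = real n * q * r"
    and row_norms: "(\<Sum>i\<in>UNIV. (norm (M $ i))\<^sup>2) = real n * \<sigma>"
    using sums_of_progression_matrix[of q M p] qpos entries \<open>n > 0\<close>
    by (simp_all add: n_def r_def \<sigma>_def power2_eq_square)
  have general: "\<bar>det M\<bar>\<^sup>2 \<le> \<sigma> ^ n"
    using det_power2_le_mean_norm_rows[of M] \<open>n > 0\<close> by (simp add: row_norms n_def)
  have refined: "\<bar>det M\<bar>\<^sup>2 \<le> (real n * q * r)\<^sup>2 * ((real n * \<sigma> - (real n * q * r)\<^sup>2) / real (n - 1)) ^ (n - 1)"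
    if "\<sigma> \<le> (real n * q * r)\<^sup>2"
    using det_power2_le_entry_sum_bound[of M, folded n_def, OF \<open>n \<ge> 2\<close>] that \<open>n > 0\<close>
    unfolding entry_sum row_norms by simp
  show ?thesis
    unfolding Let_def n_def[symmetric] r_def[symmetric]
    by (rule trichotomy_of_power2_bounds[OF \<open>n \<ge> 2\<close> qpos abs_ge_zero general[unfolded \<sigma>_def]
          refined[unfolded \<sigma>_def]])
qed

end
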